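(* Let $\alpha,\beta\in(0,1)$ and $\alpha_0:=\alpha+\beta-\alpha\beta$. Let $Z_i=(X_i,Y_i)$, $i=1,\dots,n+1$, be i.i.d., let $D_n=(Z_i)_{i\le n}$, $D_{n+1}=(Z_i)_{i\le n+1}$, and let the training mechanism $M_{\mathrm{train}}$ be permutation invariant. For a dataset $D$ of size $m$, DP-SCP outputs $\theta=M_{\mathrm{train}}(D)$ and $\hat q$ = output of Algorithm 2 applied to the scores $\{s(Z;\theta):Z\in D\}$ with $r=\lceil(1-\alpha)(n+1)\rceil$, buffer $m_n\ge0$ with $r+m_n\le m$, failure probability $\beta$, and range upper end $b$ exceeding all scores. (i) When DP-SCP is run on $D_{n+1}$, producing $(\theta_{n+1},\hat q)$, one has $\mathbb P\big(s(Z_{n+1};\theta_{n+1})\le\hat q\big)\ge 1-\alpha_0$. (ii) If moreover the whole DP-SCP mechanism $D\mapsto(\theta,\hat q)$ is $f$-DP (add/remove adjacency), then when DP-SCP is run on $D_n$, producing $(\theta_n,\hat q)$, one has $\mathbb P\big(s(Z_{n+1};\theta_n)\le\hat q\big)\ge f(\alpha_0)$.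
   Context: Algorithm 2 (Buffered DP Right-Endpoint Binary Search) on scores $S_1,\dots,S_m$: set $\tau=\sigma\Phi^{-1}(1-\beta/N)-1$, $r'=r+m_n+\tau$, $\texttt{left}=a$, $\texttt{right}=b$; for $k=1,\dots,N$: $\texttt{mid}=(\texttt{left}+\texttt{right})/2$, $\tilde C_k=\#\{i:S_i\le\texttt{mid}\}+Z_k$ with $Z_k\sim\mathcal N(0,\sigma^2)$ independent of everything else; if $\tilde C_k\ge r'$ set $\texttt{right}=\texttt{mid}$ else $\texttt{left}=\texttt{mid}$; output $\hat q=\texttt{right}$. $\Phi$ is the standard normal CDF. A training mechanism is permutation invariant if its output distribution does not depend on the order of the input data. $s(Z;\theta)$ is a fixed non-conformity score. Trade-off function $T(P,Q)(\alpha)=\inf_\phi\{1-\mathbb E_Q\phi:\mathbb E_P\phi\le\alpha\}$; $M$ is $f$-DP if $T(M(D),M(D'))\ge f$ for all $D,D'$ differing by adding/removing one entry; $f$ is convex, continuous, non-increasing with $f(\alpha)\le1-\alpha$. *)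

theory Defs
  imports "HOL-Probability.Probability"
begin

definition Phi :: "real \<Rightarrow> real" where
  "Phi x = measure (density lborel std_normal_density) {..x}"

definition Phi_inv :: "real \<Rightarrow> real" where
  "Phi_inv p = (THE x. Phi x = p)"

text \<open>One step of the search: state is (left, right); noise Zs k is Z_(k+1).\<close>
definition bs_step :: "real list \<Rightarrow> real \<Rightarrow> (nat \<Rightarrow> real) \<Rightarrow> nat \<Rightarrow> real \<times> real \<Rightarrow> real \<times> real" where
  "bs_step S r' Zs k lr =
     (let mid = (fst lr + snd lr) / 2;
          C = real (length (filter (\<lambda>x. x \<le> mid) S)) + Zs k
      in if C \<ge> r' then (fst lr, mid) else (mid, snd lr))"

text \<open>Output of Algorithm 2 on scores S for a fixed realisation Zs of the noise
  (Zs 0, ..., Zs (N-1) play the role of Z_1, ..., Z_N).\<close>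
definition alg2 :: "real \<Rightarrow> nat \<Rightarrow> real \<Rightarrow> nat \<Rightarrow> real \<Rightarrow> real \<Rightarrow> real \<Rightarrow> real list \<Rightarrow> (nat \<Rightarrow> real) \<Rightarrow> real" where
  "alg2 \<sigma> N \<beta> r mn a b S Zs =
     (let \<tau> = \<sigma> * Phi_inv (1 - \<beta> / real N) - 1;
          r' = real r + mn + \<tau>
      in snd (fold (bs_step S r' Zs) [0..<N] (a, b)))"

definition noise_space :: "real \<Rightarrow> nat \<Rightarrow> (nat \<Rightarrow> real) measure" where
  "noise_space \<sigma> N = PiM {..<N} (\<lambda>_. density lborel (normal_density 0 \<sigma>))"

definition dpscp ::
  "('z list \<Rightarrow> 'th measure) \<Rightarrow> 'th measure \<Rightarrow> ('z \<Rightarrow> 'th \<Rightarrow> real) \<Rightarrow>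
   real \<Rightarrow> nat \<Rightarrow> real \<Rightarrow> nat \<Rightarrow> real \<Rightarrow> real \<Rightarrow> real \<Rightarrow> 'z list \<Rightarrow> ('th \<times> real) measure" where
  "dpscp Mtr \<Theta> s \<sigma> N \<beta> r mn a b D =
     Mtr D \<bind> (\<lambda>\<theta>. distr (noise_space \<sigma> N) (\<Theta> \<Otimes>\<^sub>M borel)
                    (\<lambda>Zs. (\<theta>, alg2 \<sigma> N \<beta> r mn a b (map (\<lambda>z. s z \<theta>) D) Zs)))"

definition tradeoff :: "'a measure \<Rightarrow> 'a measure \<Rightarrow> real \<Rightarrow> real" where
  "tradeoff Pm Qm \<alpha> = Inf {1 - (\<integral>x. \<phi> x \<partial>Qm) | \<phi>.
       \<phi> \<in> borel_measurable Pm \<and> (\<forall>x\<in>space Pm. 0 \<le> \<phi> x \<and> \<phi> x \<le> 1)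
       \<and> (\<integral>x. \<phi> x \<partial>Pm) \<le> \<alpha>}"

definition adjacent :: "'z list \<Rightarrow> 'z list \<Rightarrow> bool" where
  "adjacent D D' \<longleftrightarrow> (\<exists>xs ys z. (D = xs @ ys \<and> D' = xs @ z # ys) \<or> (D' = xs @ ys \<and> D = xs @ z # ys))"

definition f_DP :: "('z list \<Rightarrow> 'a measure) \<Rightarrow> (real \<Rightarrow> real) \<Rightarrow> bool" where
  "f_DP M f \<longleftrightarrow> (\<forall>D D'. adjacent D D' \<longrightarrow> (\<forall>\<alpha>\<in>{0..1}. tradeoff (M D) (M D') \<alpha> \<ge> f \<alpha>))"

definition tradeoff_fun :: "(real \<Rightarrow> real) \<Rightarrow> bool" where
  "tradeoff_fun f \<longleftrightarrow> convex_on {0..1} f \<and> continuous_on {0..1} f \<and>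
     (\<forall>x\<in>{0..1}. \<forall>y\<in>{0..1}. x \<le> y \<longrightarrow> f y \<le> f x) \<and> (\<forall>x\<in>{0..1}. f x \<le> 1 - x)"

end

theory Submission
  imports Defs
begin

text \<open>
  Call a data point low-ranked for a model \<open>\<theta>\<close> if fewer than \<open>r\<close> of the \<open>n + 1\<close> scores lie
  strictly below its own score; for every \<open>\<theta>\<close> at least \<open>r\<close> of the points are low-ranked. The data
  are i.i.d. and training is permutation invariant, so the test point is low-ranked with the same
  probability as any other point, hence with probability at least \<open>r / (n + 1) \<ge> 1 - \<alpha>\<close>. With
  probability at least \<open>1 - \<beta>\<close> (a union bound over the \<open>N\<close> Gaussian noises) every noise lies
  below \<open>\<tau> + 1\<close>; then the binary search only ever moves its right end to a point with at least
  \<open>r\<close> scores at or below it, so the output dominates the score of every low-ranked point.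

  For (ii), the runs on \<open>D\<^sub>n\<^sub>+\<^sub>1\<close> and \<open>D\<^sub>n\<close> are adjacent and the indicator of the
  miscoverage event is a test, so \<open>f\<close>-DP bounds the coverage probability on \<open>D\<^sub>n\<close> from
  below by \<open>f\<close> of the miscoverage probability on \<open>D\<^sub>n\<^sub>+\<^sub>1\<close>, for every realisation of
  the data. Averaging over the data with a supporting line of the convex, nonincreasing \<open>f\<close>
  at \<open>\<alpha>\<^sub>0\<close> and using (i) gives \<open>f \<alpha>\<^sub>0\<close>.
\<close>

section \<open>The standard normal distribution and the noise\<close>

abbreviation std_normal :: "real measure" where
  "std_normal \<equiv> density lborel std_normal_density"

lemma real_distribution_std_normal: "real_distribution std_normal"
  by (simp add: real_distribution_def real_distribution_axioms_def prob_space_normal_density)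

lemma Phi_eq_cdf: "Phi = cdf std_normal"
  by (simp add: fun_eq_iff Phi_def cdf_def)

lemma isCont_Phi: "isCont Phi x"
proof -
  interpret real_distribution std_normal by (rule real_distribution_std_normal)
  have "emeasure std_normal {x} = 0"
    by (subst emeasure_density) (auto intro: nn_integral_null_set)
  then show ?thesis
    unfolding Phi_eq_cdf isCont_cdf by (simp add: measure_def)
qed

lemma Phi_strict_mono: "strict_mono Phi"
proof
  fix x y :: real assume "x < y"
  interpret real_distribution std_normal by (rule real_distribution_std_normal)
  have "{x<..y} \<notin> null_sets std_normal"
  proof
    assume "{x<..y} \<in> null_sets std_normal"
    then have "AE z in lborel. z \<in> {x<..y} \<longrightarrow> std_normal_density z = 0"
      by (simp add: null_sets_density_iff)
    then have "AE z in lborel. z \<notin> {x<..y}"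
      by (rule AE_mp) (simp add: AE_I2 normal_density_pos less_imp_neq[symmetric])
    then have "{x<..y} \<in> null_sets lborel"
      by (subst AE_iff_null_sets) auto
    then show False
      using \<open>x < y\<close> by (simp add: null_sets_def)
  qed
  then have "0 < measure std_normal {x<..y}"
    by (simp add: zero_less_measure_iff emeasure_eq_measure null_sets_def)
  then show "Phi x < Phi y"
    using cdf_diff_eq[OF \<open>x < y\<close>] unfolding Phi_eq_cdf by simp
qed

lemma Phi_Phi_inv:
  assumes "0 < p" "p < 1"
  shows "Phi (Phi_inv p) = p"
proof -
  interpret real_distribution std_normal by (rule real_distribution_std_normal)
  have "eventually (\<lambda>t. Phi t < p) at_bot"
    using cdf_lim_at_bot assms(1) unfolding Phi_eq_cdf by (rule order_tendstoD(2))
  then obtain a where a: "Phi a < p" by (auto simp: eventually_at_bot_linorder)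
  have "eventually (\<lambda>t. p < Phi t) at_top"
    using cdf_lim_at_top_prob assms(2) unfolding Phi_eq_cdf by (rule order_tendstoD(1))
  then obtain b where b: "p < Phi b" by (auto simp: eventually_at_top_linorder)
  have "a \<le> b"
    using strict_mono_less[OF Phi_strict_mono, of a b] a b by simp
  moreover have "continuous_on {a..b} Phi"
    by (intro continuous_at_imp_continuous_on ballI isCont_Phi)
  ultimately obtain t where t: "Phi t = p"
    using IVT'[of Phi a p b] a b by force
  have "Phi_inv p = t"
    unfolding Phi_inv_def
  proof (rule the_equality)
    fix x assume "Phi x = p"
    with t have "Phi x = Phi t" by simp
    then show "x = t" by (simp add: strict_mono_eq[OF Phi_strict_mono])
  qed (rule t)
  with t show ?thesis by simp
qed

lemma measure_normal_density_atLeast: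
  assumes "0 < \<sigma>"
  shows "measure (density lborel (normal_density 0 \<sigma>)) {\<sigma> * t..} = 1 - Phi t"
proof -
  let ?G = "density lborel (normal_density 0 \<sigma>)"
  interpret G: prob_space ?G by (rule prob_space_normal_density) (rule assms)
  interpret S: real_distribution std_normal by (rule real_distribution_std_normal)
  have "distributed ?G lborel (\<lambda>x. x) (normal_density 0 \<sigma>)"
    by (simp add: distributed_def distr_id2)
  then have "distributed ?G lborel (\<lambda>x. (x - 0) / \<sigma>) std_normal_density"
    using G.normal_standard_normal_convert[OF assms] by simp
  then have "distr ?G lborel (\<lambda>x. x / \<sigma>) = std_normal"
    by (simp add: distributed_def)
  moreover have "{\<sigma> * t..} = (\<lambda>x. x / \<sigma>) -` {t..} \<inter> space ?G"
    using assms by (auto simp: field_simps)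
  ultimately have "measure ?G {\<sigma> * t..} = measure std_normal {t..}"
    using measure_distr[of "\<lambda>x. x / \<sigma>" ?G lborel "{t..}"] by simp
  also have "\<dots> = measure std_normal ({t<..} \<union> {t})"
    by (intro arg_cong[where f="measure std_normal"]) auto
  also have "\<dots> = measure std_normal {t<..}"
    using isCont_Phi[of t] unfolding Phi_eq_cdf S.isCont_cdf
    by (intro measure_Un_null_set) (auto simp: null_sets_def S.emeasure_eq_measure)
  also have "\<dots> = measure std_normal (space std_normal - {..t})"
    by (intro arg_cong[where f="measure std_normal"]) auto
  also have "\<dots> = 1 - Phi t"
    by (subst S.prob_compl) (auto simp: Phi_def)
  finally show ?thesis .
qed

lemma prob_space_noise_space: "0 < \<sigma> \<Longrightarrow> prob_space (noise_space \<sigma> N)"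
  unfolding noise_space_def by (intro prob_space_PiM prob_space_normal_density)

lemma noise_space_all_below:
  assumes \<sigma>: "0 < \<sigma>" and N: "N \<ge> 1" and \<beta>: "0 < \<beta>" "\<beta> < 1"
  shows "1 - \<beta> \<le> measure (noise_space \<sigma> N)
           {Zs \<in> space (noise_space \<sigma> N). \<forall>k<N. Zs k < \<sigma> * Phi_inv (1 - \<beta> / N)}"
proof -
  let ?G = "density lborel (normal_density 0 \<sigma>)"
  let ?M = "noise_space \<sigma> N"
  define c where "c = \<sigma> * Phi_inv (1 - \<beta> / N)"
  define A where "A k = (\<lambda>Zs. Zs k) -` {c..} \<inter> space ?M" for k
  interpret M: prob_space ?M by (rule prob_space_noise_space[OF \<sigma>])
  have A_sets: "A k \<in> sets ?M" if "k < N" for k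
    unfolding A_def noise_space_def
    by (rule measurable_sets[OF measurable_component_singleton]) (use that in auto)
  have "measure ?M (A k) = \<beta> / N" if "k < N" for k
  proof -
    have "distr ?M ?G (\<lambda>Zs. Zs k) = ?G"
      unfolding noise_space_def
      by (rule distr_PiM_component) (use that \<sigma> prob_space_normal_density in auto)
    moreover have "measure ?M (A k) = measure (distr ?M ?G (\<lambda>Zs. Zs k)) {c..}"
      unfolding A_def noise_space_def using that by (intro measure_distr[symmetric]) auto
    ultimately have "measure ?M (A k) = measure ?G {c..}"
      by simp
    also have "\<dots> = \<beta> / N"
      using N \<beta> unfolding c_def measure_normal_density_atLeast[OF \<sigma>]
      by (subst Phi_Phi_inv) (auto simp: field_simps)
    finally show ?thesis .
  qed
  then have "measure ?M (\<Union>k<N. A k) \<le> \<beta>"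
    using M.finite_measure_subadditive_finite[of "{..<N}" A] A_sets N by auto
  moreover have "space ?M - (\<Union>k<N. A k) = {Zs \<in> space ?M. \<forall>k<N. Zs k < c}"
    unfolding A_def by auto
  moreover have "measure ?M (space ?M - (\<Union>k<N. A k)) = 1 - measure ?M (\<Union>k<N. A k)"
    using A_sets by (intro M.prob_compl) auto
  ultimately have "1 - \<beta> \<le> measure ?M {Zs \<in> space ?M. \<forall>k<N. Zs k < c}"
    by simp
  then show ?thesis
    by (simp only: c_def)
qed

section \<open>The noisy binary search\<close>

lemma length_filter_mono:
  assumes "\<And>x. x \<in> set xs \<Longrightarrow> P x \<Longrightarrow> Q x"
  shows "length (filter P xs) \<le> length (filter Q xs)"
  using assms by (induction xs) auto

lemma fold_bs_step_count_ge:
  fixes S :: "real list"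
  assumes "mn \<ge> 0" and "\<forall>k\<in>set ks. Zs k < \<tau> + 1"
    and "r \<le> length (filter (\<lambda>x. x \<le> snd lr) S)"
  shows "r \<le> length (filter (\<lambda>x. x \<le> snd (fold (bs_step S (real r + mn + \<tau>) Zs) ks lr)) S)"
  using assms(2,3)
proof (induction ks arbitrary: lr)
  case Nil
  then show ?case by simp
next
  case (Cons k ks)
  let ?mid = "(fst lr + snd lr) / 2"
  let ?count = "length (filter (\<lambda>x. x \<le> ?mid) S)"
  have "r \<le> length (filter (\<lambda>x. x \<le> snd (bs_step S (real r + mn + \<tau>) Zs k lr)) S)"
  proof (cases "real r + mn + \<tau> \<le> ?count + Zs k")
    case True
    \<comment> \<open>the noise is below \<open>\<tau> + 1\<close>, so the noisy count passes the shifted threshold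
      only if \<open>?count \<ge> r\<close>\<close>
    with \<open>mn \<ge> 0\<close> Cons.prems(1) have "r \<le> ?count" by simp
    with True show ?thesis by (simp add: bs_step_def Let_def)
  next
    case False
    with Cons.prems(2) show ?thesis by (simp add: bs_step_def Let_def)
  qed
  with Cons.IH Cons.prems(1) show ?case by simp
qed

lemma alg2_count_ge:
  fixes S :: "real list"
  assumes "\<forall>x\<in>set S. x < b" and "r \<le> length S" and "mn \<ge> 0"
    and "\<forall>k<N. Zs k < \<sigma> * Phi_inv (1 - \<beta> / N)"
  shows "r \<le> length (filter (\<lambda>x. x \<le> alg2 \<sigma> N \<beta> r mn a b S Zs) S)"
proof -
  have "filter (\<lambda>x. x \<le> snd (a, b)) S = S"
    using assms(1) by (simp add: filter_id_conv less_imp_le)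
  then show ?thesis
    unfolding alg2_def Let_def using assms(2-4)
    by (intro fold_bs_step_count_ge) auto
qed

lemma le_of_length_filter:
  fixes S :: "real list"
  assumes "length (filter (\<lambda>x. x < y) S) < r" and "r \<le> length (filter (\<lambda>x. x \<le> q) S)"
  shows "y \<le> q"
proof (rule ccontr)
  assume "\<not> y \<le> q"
  then have "length (filter (\<lambda>x. x \<le> q) S) \<le> length (filter (\<lambda>x. x < y) S)"
    by (intro length_filter_mono) auto
  with assms show False by linarith
qed

lemma borel_measurable_length_filter:
  assumes "\<And>g. g \<in> set fs \<Longrightarrow> {x \<in> space M. R (g x) x} \<in> sets M"
  shows "(\<lambda>x. real (length (filter (\<lambda>y. R y x) (map (\<lambda>g. g x) fs)))) \<in> borel_measurable M"
  using assms
proof (induction fs)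
  case Nil
  then show ?case by simp
next
  case (Cons g fs)
  have IH: "(\<lambda>x. real (length (filter (\<lambda>y. R y x) (map (\<lambda>g. g x) fs)))) \<in> borel_measurable M"
    using Cons by simp
  have "(\<lambda>x. real (length (filter (\<lambda>y. R y x) (map (\<lambda>g. g x) (g # fs))))) =
      (\<lambda>x. (if R (g x) x then 1 else 0) + real (length (filter (\<lambda>y. R y x) (map (\<lambda>g. g x) fs))))"
    by (rule ext) simp
  also have "\<dots> \<in> borel_measurable M"
    using Cons.prems[of g] by (intro borel_measurable_add[OF measurable_If IH]) auto
  finally show ?case .
qed

lemma borel_measurable_fold_bs_step:
  assumes Ss: "\<forall>g\<in>set Ss. g \<in> borel_measurable M"
    and Zs: "\<forall>k\<in>set ks. (\<lambda>x. Zs x k) \<in> borel_measurable M"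
    and lr: "lr \<in> borel_measurable M"
  shows "(\<lambda>x. fold (bs_step (map (\<lambda>g. g x) Ss) r' (Zs x)) ks (lr x)) \<in> borel_measurable M"
  using Zs lr
proof (induction ks arbitrary: lr)
  case Nil
  then show ?case by simp
next
  case (Cons k ks)
  let ?mid = "\<lambda>x. (fst (lr x) + snd (lr x)) / 2"
  let ?count = "\<lambda>x. real (length (filter (\<lambda>y. y \<le> ?mid x) (map (\<lambda>g. g x) Ss)))"
  have l: "(\<lambda>x. fst (lr x)) \<in> borel_measurable M" and u: "(\<lambda>x. snd (lr x)) \<in> borel_measurable M"
    using Cons.prems(2) continuous_on_fst[OF continuous_on_id] continuous_on_snd[OF continuous_on_id]
    by (auto intro: borel_measurable_continuous_on)
  then have mid: "?mid \<in> borel_measurable M"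
    by (intro borel_measurable_divide borel_measurable_add) auto
  have "?count \<in> borel_measurable M"
    using Ss by (intro borel_measurable_length_filter borel_measurable_le mid) auto
  then have "{x \<in> space M. r' \<le> ?count x + Zs x k} \<in> sets M"
    using Cons.prems(1) by (intro borel_measurable_le borel_measurable_add) auto
  then have "(\<lambda>x. if r' \<le> ?count x + Zs x k then (fst (lr x), ?mid x) else (?mid x, snd (lr x)))
      \<in> borel_measurable M"
    using l u mid by (intro measurable_If borel_measurable_Pair)
  then have "(\<lambda>x. bs_step (map (\<lambda>g. g x) Ss) r' (Zs x) k (lr x)) \<in> borel_measurable M"
    by (simp add: bs_step_def Let_def)
  with Cons show ?case by simp
qed

lemma borel_measurable_alg2:
  assumes "\<forall>g\<in>set Ss. g \<in> borel_measurable M" and "\<forall>k<N. (\<lambda>x. Zs x k) \<in> borel_measurable M"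
  shows "(\<lambda>x. alg2 \<sigma> N \<beta> r mn a b (map (\<lambda>g. g x) Ss) (Zs x)) \<in> borel_measurable M"
  unfolding alg2_def Let_def using assms
  by (intro borel_measurable_continuous_on[where f=snd] borel_measurable_fold_bs_step)
     (auto intro: continuous_intros)

lemma borel_measurable_noise_component:
  assumes "Zs \<in> measurable M (noise_space \<sigma> N)" and "k < N"
  shows "(\<lambda>x. Zs x k) \<in> borel_measurable M"
proof -
  have "(\<lambda>Zs. Zs k) \<in> measurable (noise_space \<sigma> N) (density lborel (normal_density 0 \<sigma>))"
    unfolding noise_space_def using assms(2) by (intro measurable_component_singleton) simp
  then show ?thesis
    using measurable_compose[OF assms(1)] by (simp cong: measurable_cong_sets)
qed

lemma borel_measurable_alg2_noise: "alg2 \<sigma> N \<beta> r mn a b S \<in> borel_measurable (noise_space \<sigma> N)"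
  using borel_measurable_alg2[of "map (\<lambda>x _. x) S" "noise_space \<sigma> N" N "\<lambda>Zs. Zs" \<sigma> \<beta> r mn a b]
    borel_measurable_noise_component[where \<sigma>=\<sigma> and N=N, OF measurable_ident_sets[OF refl]]
  by (simp add: comp_def)

lemma measure_alg2_ge:
  fixes S :: "real list"
  assumes \<sigma>: "0 < \<sigma>" and N: "N \<ge> 1" and \<beta>: "0 < \<beta>" "\<beta> < 1" and mn: "mn \<ge> 0"
    and "\<forall>x\<in>set S. x < b" and "r \<le> length S" and "length (filter (\<lambda>x. x < y) S) < r"
  shows "1 - \<beta> \<le> measure (noise_space \<sigma> N) {Zs \<in> space (noise_space \<sigma> N). y \<le> alg2 \<sigma> N \<beta> r mn a b S Zs}"
proof -
  interpret noise: prob_space "noise_space \<sigma> N"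
    by (rule prob_space_noise_space[OF \<sigma>])
  have "{Zs \<in> space (noise_space \<sigma> N). \<forall>k<N. Zs k < \<sigma> * Phi_inv (1 - \<beta> / N)}
      \<subseteq> {Zs \<in> space (noise_space \<sigma> N). y \<le> alg2 \<sigma> N \<beta> r mn a b S Zs}"
    using assms(6-8) mn by (auto intro: le_of_length_filter alg2_count_ge)
  moreover have "{Zs \<in> space (noise_space \<sigma> N). y \<le> alg2 \<sigma> N \<beta> r mn a b S Zs} \<in> sets (noise_space \<sigma> N)"
    by (rule borel_measurable_le[OF measurable_const borel_measurable_alg2_noise]) simp
  ultimately show ?thesis
    using noise_space_all_below[OF \<sigma> N \<beta>] noise.finite_measure_mono by (blast intro: order.trans)
qed

section \<open>The DP-SCP mechanism\<close>

lemma measurable_alg2_kernel: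
  assumes \<sigma>: "0 < \<sigma>" and \<theta>: "\<theta> \<in> measurable M \<Theta>" and Ss: "\<forall>g\<in>set Ss. g \<in> borel_measurable M"
  shows "(\<lambda>x. distr (noise_space \<sigma> N) (\<Theta> \<Otimes>\<^sub>M borel)
            (\<lambda>Zs. (\<theta> x, alg2 \<sigma> N \<beta> r mn a b (map (\<lambda>g. g x) Ss) Zs)))
         \<in> measurable M (subprob_algebra (\<Theta> \<Otimes>\<^sub>M borel))"
proof (rule measurable_distr2)
  have "(\<lambda>x. alg2 \<sigma> N \<beta> r mn a b (map (\<lambda>g. g x) (map (\<lambda>g x. g (fst x)) Ss)) (snd x))
      \<in> borel_measurable (M \<Otimes>\<^sub>M noise_space \<sigma> N)"
    using Ss by (intro borel_measurable_alg2 allI impI borel_measurable_noise_component[OF measurable_snd]) auto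
  then show "(\<lambda>(x, Zs). (\<theta> x, alg2 \<sigma> N \<beta> r mn a b (map (\<lambda>g. g x) Ss) Zs))
      \<in> measurable (M \<Otimes>\<^sub>M noise_space \<sigma> N) (\<Theta> \<Otimes>\<^sub>M borel)"
    using \<theta> by (simp add: case_prod_beta' comp_def)
  show "(\<lambda>_. noise_space \<sigma> N) \<in> measurable M (subprob_algebra (noise_space \<sigma> N))"
    using prob_space_noise_space[OF \<sigma>]
    by (intro measurable_const) (auto simp: space_subprob_algebra prob_space_imp_subprob_space)
qed

lemma measurable_alg2_noise:
  "\<theta> \<in> space \<Theta> \<Longrightarrow> (\<lambda>Zs. (\<theta>, alg2 \<sigma> N \<beta> r mn a b S Zs)) \<in> measurable (noise_space \<sigma> N) (\<Theta> \<Otimes>\<^sub>M borel)"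
  by (intro measurable_Pair measurable_const borel_measurable_alg2_noise)

definition cover_event :: "'th measure \<Rightarrow> ('z \<Rightarrow> 'th \<Rightarrow> real) \<Rightarrow> 'z \<Rightarrow> ('th \<times> real) set" where
  "cover_event \<Theta> s z = {x \<in> space (\<Theta> \<Otimes>\<^sub>M borel). s z (fst x) \<le> snd x}"

definition low_rank_set :: "'th measure \<Rightarrow> ('z \<Rightarrow> 'th \<Rightarrow> real) \<Rightarrow> nat \<Rightarrow> 'z list \<Rightarrow> 'z \<Rightarrow> 'th set" where
  "low_rank_set \<Theta> s r D z = {\<theta> \<in> space \<Theta>. length (filter (\<lambda>x. x < s z \<theta>) (map (\<lambda>z. s z \<theta>) D)) < r}"

lemma cover_event_sets:
  assumes "(\<lambda>\<theta>. s z \<theta>) \<in> borel_measurable \<Theta>"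
  shows "cover_event \<Theta> s z \<in> sets (\<Theta> \<Otimes>\<^sub>M borel)"
  unfolding cover_event_def
  by (rule borel_measurable_le[OF measurable_compose[OF measurable_fst assms] measurable_snd])

lemma low_rank_set_sets:
  assumes "\<forall>z'\<in>set (z # D). (\<lambda>\<theta>. s z' \<theta>) \<in> borel_measurable \<Theta>"
  shows "low_rank_set \<Theta> s r D z \<in> sets \<Theta>"
proof -
  have "(\<lambda>\<theta>. real (length (filter (\<lambda>x. x < s z \<theta>) (map (\<lambda>g. g \<theta>) (map (\<lambda>z \<theta>. s z \<theta>) D)))))
      \<in> borel_measurable \<Theta>"
    using assms by (intro borel_measurable_length_filter) auto
  from borel_measurable_less[OF this borel_measurable_const[of "real r"]] show ?thesis
    unfolding low_rank_set_def by (simp add: comp_def)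
qed

lemma measurable_dpscp_kernel:
  assumes "0 < \<sigma>" and "\<forall>z\<in>set D. (\<lambda>\<theta>. s z \<theta>) \<in> borel_measurable \<Theta>"
  shows "(\<lambda>\<theta>. distr (noise_space \<sigma> N) (\<Theta> \<Otimes>\<^sub>M borel)
            (\<lambda>Zs. (\<theta>, alg2 \<sigma> N \<beta> r mn a b (map (\<lambda>z. s z \<theta>) D) Zs)))
         \<in> measurable \<Theta> (subprob_algebra (\<Theta> \<Otimes>\<^sub>M borel))"
  using measurable_alg2_kernel[OF assms(1) measurable_ident, of "map (\<lambda>z \<theta>. s z \<theta>) D"] assms(2)
  by (simp add: comp_def)

lemma
  assumes "0 < \<sigma>" and "\<forall>z\<in>set D. (\<lambda>\<theta>. s z \<theta>) \<in> borel_measurable \<Theta>"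
    and "prob_space (Mtr D)" and "sets (Mtr D) = sets \<Theta>"
  shows prob_space_dpscp: "prob_space (dpscp Mtr \<Theta> s \<sigma> N \<beta> r mn a b D)"
    and sets_dpscp: "sets (dpscp Mtr \<Theta> s \<sigma> N \<beta> r mn a b D) = sets (\<Theta> \<Otimes>\<^sub>M borel)"
proof -
  interpret prob_space "Mtr D" by fact
  interpret noise: prob_space "noise_space \<sigma> N" by (rule prob_space_noise_space) fact
  have K: "(\<lambda>\<theta>. distr (noise_space \<sigma> N) (\<Theta> \<Otimes>\<^sub>M borel)
            (\<lambda>Zs. (\<theta>, alg2 \<sigma> N \<beta> r mn a b (map (\<lambda>z. s z \<theta>) D) Zs)))
         \<in> measurable (Mtr D) (subprob_algebra (\<Theta> \<Otimes>\<^sub>M borel))"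
    using measurable_dpscp_kernel[OF assms(1,2)] by (simp cong: measurable_cong_sets add: assms(4))
  show "prob_space (dpscp Mtr \<Theta> s \<sigma> N \<beta> r mn a b D)"
    unfolding dpscp_def using sets_eq_imp_space_eq[OF assms(4)]
    by (intro prob_space_bind[OF AE_I2 K] noise.prob_space_distr measurable_alg2_noise) auto
  show "sets (dpscp Mtr \<Theta> s \<sigma> N \<beta> r mn a b D) = sets (\<Theta> \<Otimes>\<^sub>M borel)"
    unfolding dpscp_def by (rule sets_bind) (auto simp: not_empty)
qed

lemma emeasure_bind_ge:
  assumes "space M \<noteq> {}" and "K \<in> measurable M (subprob_algebra N)" and "A \<in> sets N" and "G \<in> sets M"
    and "\<And>x. x \<in> G \<Longrightarrow> c \<le> emeasure (K x) A"
  shows "c * emeasure M G \<le> emeasure (M \<bind> K) A"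
proof -
  have "c * emeasure M G = (\<integral>\<^sup>+x. c * indicator G x \<partial>M)"
    using assms(4) by (rule nn_integral_cmult_indicator[symmetric])
  also have "\<dots> \<le> (\<integral>\<^sup>+x. emeasure (K x) A \<partial>M)"
    using assms(5) by (intro nn_integral_mono) (simp split: split_indicator)
  also have "\<dots> = emeasure (M \<bind> K) A"
    using assms(1-3) by (rule emeasure_bind[symmetric])
  finally show ?thesis .
qed

lemma measure_dpscp_cover_event_ge:
  assumes \<sigma>: "0 < \<sigma>" and N: "N \<ge> 1" and \<beta>: "0 < \<beta>" "\<beta> < 1" and mn: "mn \<ge> 0"
    and r: "r \<le> length D"
    and meas: "\<forall>z'\<in>set (z # D). (\<lambda>\<theta>. s z' \<theta>) \<in> borel_measurable \<Theta>"
    and upper: "\<forall>z'\<in>set D. \<forall>\<theta>\<in>space \<Theta>. s z' \<theta> < b"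
    and prob: "prob_space (Mtr D)" and sets: "sets (Mtr D) = sets \<Theta>"
  shows "(1 - \<beta>) * measure (Mtr D) (low_rank_set \<Theta> s r D z)
           \<le> measure (dpscp Mtr \<Theta> s \<sigma> N \<beta> r mn a b D) (cover_event \<Theta> s z)"
proof -
  let ?M = "dpscp Mtr \<Theta> s \<sigma> N \<beta> r mn a b D"
  let ?alg2 = "\<lambda>\<theta>. alg2 \<sigma> N \<beta> r mn a b (map (\<lambda>z. s z \<theta>) D)"
  let ?K = "\<lambda>\<theta>. distr (noise_space \<sigma> N) (\<Theta> \<Otimes>\<^sub>M borel) (\<lambda>Zs. (\<theta>, ?alg2 \<theta> Zs))"
  interpret Mtr: prob_space "Mtr D" by (rule prob)
  interpret noise: prob_space "noise_space \<sigma> N" by (rule prob_space_noise_space[OF \<sigma>])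
  interpret dpscp: prob_space ?M
    using \<sigma> meas prob sets by (intro prob_space_dpscp[where Mtr=Mtr and D=D]) auto
  have cover: "cover_event \<Theta> s z \<in> sets (\<Theta> \<Otimes>\<^sub>M borel)"
    using meas by (intro cover_event_sets) simp
  have "ennreal (1 - \<beta>) \<le> emeasure (?K \<theta>) (cover_event \<Theta> s z)"
    if \<theta>: "\<theta> \<in> low_rank_set \<Theta> s r D z" for \<theta>
  proof -
    have \<Theta>: "\<theta> \<in> space \<Theta>"
      using \<theta> by (simp add: low_rank_set_def)
    have "(\<lambda>Zs. (\<theta>, ?alg2 \<theta> Zs)) -` cover_event \<Theta> s z \<inter> space (noise_space \<sigma> N)
        = {Zs \<in> space (noise_space \<sigma> N). s z \<theta> \<le> ?alg2 \<theta> Zs}"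
      using \<Theta> by (auto simp: cover_event_def space_pair_measure)
    then have "emeasure (?K \<theta>) (cover_event \<Theta> s z)
        = measure (noise_space \<sigma> N) {Zs \<in> space (noise_space \<sigma> N). s z \<theta> \<le> ?alg2 \<theta> Zs}"
      by (simp add: emeasure_distr[OF measurable_alg2_noise[OF \<Theta>] cover] noise.emeasure_eq_measure)
    moreover have "1 - \<beta> \<le> measure (noise_space \<sigma> N) {Zs \<in> space (noise_space \<sigma> N). s z \<theta> \<le> ?alg2 \<theta> Zs}"
      using \<theta> \<Theta> upper r by (intro measure_alg2_ge[OF \<sigma> N \<beta> mn]) (auto simp: low_rank_set_def)
    ultimately show ?thesis
      by (simp add: ennreal_leI)
  qed
  moreover have "?K \<in> measurable (Mtr D) (subprob_algebra (\<Theta> \<Otimes>\<^sub>M borel))"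
    unfolding measurable_cong_sets[OF sets refl] using meas by (intro measurable_dpscp_kernel[OF \<sigma>]) simp
  moreover have "low_rank_set \<Theta> s r D z \<in> sets (Mtr D)"
    using low_rank_set_sets[OF meas] by (simp add: sets)
  ultimately have "ennreal (1 - \<beta>) * emeasure (Mtr D) (low_rank_set \<Theta> s r D z)
      \<le> emeasure ?M (cover_event \<Theta> s z)"
    unfolding dpscp_def using cover by (intro emeasure_bind_ge Mtr.not_empty)
  then show ?thesis
    using \<beta> by (simp add: Mtr.emeasure_eq_measure dpscp.emeasure_eq_measure ennreal_mult[symmetric])
qed

lemma borel_measurable_score:
  assumes "(\<lambda>(z, \<theta>). s z \<theta>) \<in> borel_measurable (P \<Otimes>\<^sub>M \<Theta>)"
    and "f \<in> measurable M P" and "g \<in> measurable M \<Theta>"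
  shows "(\<lambda>x. s (f x) (g x)) \<in> borel_measurable M"
  using measurable_compose[OF measurable_Pair[OF assms(2,3)] assms(1)] by simp

lemma borel_measurable_score_slice:
  assumes "(\<lambda>(z, \<theta>). s z \<theta>) \<in> borel_measurable (P \<Otimes>\<^sub>M \<Theta>)" and "z \<in> space P"
  shows "(\<lambda>\<theta>. s z \<theta>) \<in> borel_measurable \<Theta>"
  using assms by (intro borel_measurable_score[OF assms(1)] measurable_const measurable_ident_sets) auto

lemma borel_measurable_score_PiM:
  assumes "(\<lambda>(z, \<theta>). s z \<theta>) \<in> borel_measurable (P \<Otimes>\<^sub>M \<Theta>)"
    and "\<omega> \<in> space (PiM I (\<lambda>_. P))" and "i \<in> I"
  shows "(\<lambda>\<theta>. s (\<omega> i) \<theta>) \<in> borel_measurable \<Theta>"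
  using assms(2,3) by (intro borel_measurable_score_slice[OF assms(1)]) (simp add: space_PiM PiE_iff)

lemma
  assumes \<sigma>: "0 < \<sigma>" and sm: "(\<lambda>(z, \<theta>). s z \<theta>) \<in> borel_measurable (P \<Otimes>\<^sub>M \<Theta>)"
    and prob: "\<And>D. prob_space (Mtr D)" and sets: "\<And>D. sets (Mtr D) = sets \<Theta>"
    and \<omega>: "\<omega> \<in> space (PiM I (\<lambda>_. P))" and L: "set L \<subseteq> I"
  shows prob_space_dpscp_sample: "prob_space (dpscp Mtr \<Theta> s \<sigma> N \<beta> r mn a b (map \<omega> L))"
    and sets_dpscp_sample: "sets (dpscp Mtr \<Theta> s \<sigma> N \<beta> r mn a b (map \<omega> L)) = sets (\<Theta> \<Otimes>\<^sub>M borel)"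
proof -
  have "\<forall>z\<in>set (map \<omega> L). (\<lambda>\<theta>. s z \<theta>) \<in> borel_measurable \<Theta>"
    using L by (auto intro!: borel_measurable_score_PiM[OF sm \<omega>])
  then show "prob_space (dpscp Mtr \<Theta> s \<sigma> N \<beta> r mn a b (map \<omega> L))"
    and "sets (dpscp Mtr \<Theta> s \<sigma> N \<beta> r mn a b (map \<omega> L)) = sets (\<Theta> \<Otimes>\<^sub>M borel)"
    using prob_space_dpscp[where Mtr=Mtr and D="map \<omega> L", OF \<sigma> _ prob sets]
      sets_dpscp[where Mtr=Mtr and D="map \<omega> L", OF \<sigma> _ prob sets] by blast+
qed

lemma measurable_dpscp:
  assumes \<sigma>: "0 < \<sigma>" and sm: "(\<lambda>(z, \<theta>). s z \<theta>) \<in> borel_measurable (P \<Otimes>\<^sub>M \<Theta>)"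
    and ker: "(\<lambda>\<omega>. Mtr (map \<omega> L)) \<in> measurable (PiM I (\<lambda>_. P)) (subprob_algebra \<Theta>)"
    and L: "set L \<subseteq> I"
  shows "(\<lambda>\<omega>. dpscp Mtr \<Theta> s \<sigma> N \<beta> r mn a b (map \<omega> L))
           \<in> measurable (PiM I (\<lambda>_. P)) (subprob_algebra (\<Theta> \<Otimes>\<^sub>M borel))"
proof -
  let ?W = "PiM I (\<lambda>_. P) \<Otimes>\<^sub>M \<Theta>"
  have "(\<lambda>w. distr (noise_space \<sigma> N) (\<Theta> \<Otimes>\<^sub>M borel) (\<lambda>Zs. (snd w,
            alg2 \<sigma> N \<beta> r mn a b (map (\<lambda>g. g w) (map (\<lambda>i w. s (fst w i) (snd w)) L)) Zs)))
        \<in> measurable ?W (subprob_algebra (\<Theta> \<Otimes>\<^sub>M borel))"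
    using L by (intro measurable_alg2_kernel[OF \<sigma> measurable_snd] ballI) (auto intro!: borel_measurable_score[OF sm]
        measurable_snd measurable_compose[OF measurable_fst measurable_component_singleton])
  then show ?thesis
    unfolding dpscp_def by (intro measurable_bind[OF ker]) (simp add: comp_def)
qed

lemma measurable_measure_dpscp_cover_event:
  assumes \<sigma>: "0 < \<sigma>" and sm: "(\<lambda>(z, \<theta>). s z \<theta>) \<in> borel_measurable (P \<Otimes>\<^sub>M \<Theta>)"
    and ker: "(\<lambda>\<omega>. Mtr (map \<omega> L)) \<in> measurable (PiM I (\<lambda>_. P)) (subprob_algebra \<Theta>)"
    and L: "set L \<subseteq> I" and j: "j \<in> I"
  shows "(\<lambda>\<omega>. measure (dpscp Mtr \<Theta> s \<sigma> N \<beta> r mn a b (map \<omega> L)) (cover_event \<Theta> s (\<omega> j)))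
           \<in> borel_measurable (PiM I (\<lambda>_. P))"
proof (rule measure_measurable_subprob_algebra2[OF _ measurable_dpscp[OF \<sigma> sm ker L]])
  let ?W = "PiM I (\<lambda>_. P) \<Otimes>\<^sub>M (\<Theta> \<Otimes>\<^sub>M borel)"
  have "(\<lambda>w. s (fst w j) (fst (snd w))) \<in> borel_measurable ?W"
    using j by (intro borel_measurable_score[OF sm] measurable_compose[OF measurable_snd measurable_fst]
        measurable_compose[OF measurable_fst measurable_component_singleton])
  from borel_measurable_le[OF this measurable_compose[OF measurable_snd measurable_snd]]
  have "{w \<in> space ?W. s (fst w j) (fst (snd w)) \<le> snd (snd w)} \<in> sets ?W" .
  also have "{w \<in> space ?W. s (fst w j) (fst (snd w)) \<le> snd (snd w)}
      = (SIGMA \<omega>:space (PiM I (\<lambda>_. P)). cover_event \<Theta> s (\<omega> j))"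
    by (auto simp: cover_event_def space_pair_measure)
  finally show "(SIGMA \<omega>:space (PiM I (\<lambda>_. P)). cover_event \<Theta> s (\<omega> j)) \<in> sets ?W" .
qed

lemma measurable_measure_low_rank_set:
  assumes sm: "(\<lambda>(z, \<theta>). s z \<theta>) \<in> borel_measurable (P \<Otimes>\<^sub>M \<Theta>)"
    and ker: "(\<lambda>\<omega>. Mtr (map \<omega> L)) \<in> measurable (PiM I (\<lambda>_. P)) (subprob_algebra \<Theta>)"
    and L: "set L \<subseteq> I" and j: "j \<in> I"
  shows "(\<lambda>\<omega>. measure (Mtr (map \<omega> L)) (low_rank_set \<Theta> s r (map \<omega> L) (\<omega> j)))
           \<in> borel_measurable (PiM I (\<lambda>_. P))"
proof (rule measure_measurable_subprob_algebra2[OF _ ker])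
  let ?W = "PiM I (\<lambda>_. P) \<Otimes>\<^sub>M \<Theta>"
  have score: "(\<lambda>w. s (fst w i) (snd w)) \<in> borel_measurable ?W" if "i \<in> I" for i
    using that by (intro borel_measurable_score[OF sm] measurable_snd
        measurable_compose[OF measurable_fst measurable_component_singleton])
  have "(\<lambda>w. real (length (filter (\<lambda>x. x < s (fst w j) (snd w))
            (map (\<lambda>g. g w) (map (\<lambda>i w. s (fst w i) (snd w)) L))))) \<in> borel_measurable ?W"
    using L j by (intro borel_measurable_length_filter borel_measurable_less) (auto intro!: score)
  from borel_measurable_less[OF this borel_measurable_const[of "real r"]]
  have "{w \<in> space ?W. length (filter (\<lambda>x. x < s (fst w j) (snd w)) (map (\<lambda>i. s (fst w i) (snd w)) L)) < r}
      \<in> sets ?W"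
    by (simp add: comp_def)
  also have "{w \<in> space ?W. length (filter (\<lambda>x. x < s (fst w j) (snd w)) (map (\<lambda>i. s (fst w i) (snd w)) L)) < r}
      = (SIGMA \<omega>:space (PiM I (\<lambda>_. P)). low_rank_set \<Theta> s r (map \<omega> L) (\<omega> j))"
    by (auto simp: low_rank_set_def space_pair_measure comp_def)
  finally show "(SIGMA \<omega>:space (PiM I (\<lambda>_. P)). low_rank_set \<Theta> s r (map \<omega> L) (\<omega> j)) \<in> sets ?W" .
qed

lemma integrable_measure_prob_kernel:
  assumes "prob_space M" and "(\<lambda>x. measure (K x) (A x)) \<in> borel_measurable M"
    and "\<And>x. x \<in> space M \<Longrightarrow> prob_space (K x)"
  shows "integrable M (\<lambda>x. measure (K x) (A x))"
proof -
  interpret prob_space M by fact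
  show ?thesis
    using assms(2,3) by (intro integrable_const_bound[where B=1] AE_I2) (auto simp: prob_space.prob_le_1)
qed

lemma integrable_measure_dpscp_cover_event:
  assumes \<sigma>: "0 < \<sigma>" and P: "prob_space P" and sm: "(\<lambda>(z, \<theta>). s z \<theta>) \<in> borel_measurable (P \<Otimes>\<^sub>M \<Theta>)"
    and prob: "\<And>D. prob_space (Mtr D)" and sets: "\<And>D. sets (Mtr D) = sets \<Theta>"
    and ker: "(\<lambda>\<omega>. Mtr (map \<omega> L)) \<in> measurable (PiM I (\<lambda>_. P)) (subprob_algebra \<Theta>)"
    and L: "set L \<subseteq> I" and j: "j \<in> I"
  shows "integrable (PiM I (\<lambda>_. P))
           (\<lambda>\<omega>. measure (dpscp Mtr \<Theta> s \<sigma> N \<beta> r mn a b (map \<omega> L)) (cover_event \<Theta> s (\<omega> j)))"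
  using P L j
  by (intro integrable_measure_prob_kernel prob_space_PiM measurable_measure_dpscp_cover_event[OF \<sigma> sm ker]
      prob_space_dpscp_sample[OF \<sigma> sm prob sets]) auto

section \<open>Exchangeability and marginal coverage\<close>

lemma low_rank_set_mset_cong:
  assumes "mset D = mset D'"
  shows "low_rank_set \<Theta> s r D z = low_rank_set \<Theta> s r D' z"
proof -
  have "mset (filter P (map f D)) = mset (filter P (map f D'))" for P f
    using assms by simp
  then have length_eq: "length (filter P (map f D)) = length (filter P (map f D'))" for P f
    by (metis size_mset)
  show ?thesis
    unfolding low_rank_set_def by (simp only: length_eq)
qed

lemma mset_map_upt_reindex:
  assumes "bij_betw \<pi> {..<m} {..<m}"
  shows "mset (map (\<lambda>i. f (\<pi> i)) [0..<m]) = mset (map f [0..<m])"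
proof -
  have "image_mset \<pi> (mset_set {..<m}) = mset_set {..<m}"
    using assms by (simp add: image_mset_mset_set bij_betw_def)
  then have "image_mset f (image_mset \<pi> (mset_set {..<m})) = image_mset f (mset_set {..<m})"
    by simp
  then show ?thesis
    by (simp add: mset_upt atLeast0LessThan multiset.map_comp comp_def)
qed

lemma integral_PiM_reindex:
  fixes F :: "('i \<Rightarrow> 'a) \<Rightarrow> real"
  assumes "prob_space P" and "bij_betw \<pi> I I" and "F \<in> borel_measurable (PiM I (\<lambda>_. P))"
  shows "(\<integral>\<omega>. F (\<lambda>i\<in>I. \<omega> (\<pi> i)) \<partial>PiM I (\<lambda>_. P)) = (\<integral>\<omega>. F \<omega> \<partial>PiM I (\<lambda>_. P))"
proof -
  have T: "(\<lambda>\<omega>. \<lambda>i\<in>I. \<omega> (\<pi> i)) \<in> measurable (PiM I (\<lambda>_. P)) (PiM I (\<lambda>_. P))"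
    using assms(2) by (intro measurable_restrict measurable_component_singleton) (auto simp: bij_betw_def)
  have "distr (PiM I (\<lambda>_. P)) (PiM I (\<lambda>_. P)) (\<lambda>\<omega>. \<lambda>i\<in>I. \<omega> (\<pi> i)) = PiM I (\<lambda>_. P)"
    using distr_PiM_reindex[of I "\<lambda>_. P" \<pi> I] assms(1,2) by (auto simp: bij_betw_def)
  then show ?thesis
    using integral_distr[OF T assms(3)] by simp
qed

lemma card_low_rank_ge:
  fixes S :: "'a::linorder list"
  assumes "r \<le> length S"
  shows "r \<le> card {i. i < length S \<and> length (filter (\<lambda>x. x < S ! i) S) < r}"
proof (rule ccontr)
  define T where "T = {i. i < length S \<and> length (filter (\<lambda>x. x < S ! i) S) < r}"
  define C where "C = {..<length S} - T"
  assume "\<not> r \<le> card {i. i < length S \<and> length (filter (\<lambda>x. x < S ! i) S) < r}"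
  then have "card T < r" unfolding T_def by simp
  have "C \<noteq> {}"
  proof
    assume "C = {}"
    then have "card {..<length S} \<le> card T"
      by (intro card_mono) (auto simp: T_def C_def)
    with \<open>card T < r\<close> assms show False by simp
  qed
  then obtain i where i: "i \<in> C" and min: "\<And>j. j \<in> C \<Longrightarrow> S ! i \<le> S ! j"
    using arg_min_if_finite[of C "(!) S"] arg_min_least[of C _ "(!) S"] unfolding C_def by blast
  \<comment> \<open>a minimal score outside \<open>T\<close> has only elements of \<open>T\<close> below it, so it belongs to \<open>T\<close>\<close>
  have "{j. j < length S \<and> S ! j < S ! i} \<subseteq> T"
    using min unfolding C_def by force
  then have "length (filter (\<lambda>x. x < S ! i) S) \<le> card T"
    unfolding length_filter_conv_card by (intro card_mono) (auto simp: T_def)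
  with \<open>card T < r\<close> i show False by (auto simp: C_def T_def)
qed

lemma sum_indicator_low_rank_set_ge:
  assumes "r \<le> length D" and "\<theta> \<in> space \<Theta>"
  shows "real r \<le> (\<Sum>i<length D. indicator (low_rank_set \<Theta> s r D (D ! i)) \<theta>)"
proof -
  let ?S = "map (\<lambda>z. s z \<theta>) D"
  have "{i. i < length ?S \<and> length (filter (\<lambda>x. x < ?S ! i) ?S) < r}
      = {..<length D} \<inter> {i. \<theta> \<in> low_rank_set \<Theta> s r D (D ! i)}"
    using assms(2) by (auto simp: low_rank_set_def)
  with card_low_rank_ge[of r ?S] assms(1) show ?thesis
    by (simp add: indicator_def sum_of_bool_eq)
qed

lemma sum_measure_low_rank_set_ge:
  assumes "prob_space M" and "space M = space \<Theta>" and "r \<le> length D"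
    and "\<And>i. i < length D \<Longrightarrow> low_rank_set \<Theta> s r D (D ! i) \<in> sets M"
  shows "real r \<le> (\<Sum>i<length D. measure M (low_rank_set \<Theta> s r D (D ! i)))"
proof -
  interpret prob_space M by fact
  let ?G = "\<lambda>i. low_rank_set \<Theta> s r D (D ! i)"
  have int: "integrable M (indicator (?G i) :: _ \<Rightarrow> real)" if "i < length D" for i
    using assms(4)[OF that] by (simp add: emeasure_eq_measure)
  have "real r \<le> (\<integral>\<theta>. (\<Sum>i<length D. indicator (?G i) \<theta>) \<partial>M)"
    using assms(2,3) int
    by (intro integral_ge_const integrable_sum AE_I2 sum_indicator_low_rank_set_ge) auto
  also have "\<dots> = (\<Sum>i<length D. measure M (?G i))"
    using int assms(2)
    by (subst Bochner_Integration.integral_sum) (auto simp: low_rank_set_def Int_absorb2)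
  finally show ?thesis .
qed

lemma integral_low_rank_exchangeable:
  assumes P: "prob_space P" and perm_inv: "\<And>D D'. mset D = mset D' \<Longrightarrow> Mtr D = Mtr D'"
    and sm: "(\<lambda>(z, \<theta>). s z \<theta>) \<in> borel_measurable (P \<Otimes>\<^sub>M \<Theta>)"
    and ker: "(\<lambda>\<omega>. Mtr (map \<omega> [0..<m])) \<in> measurable (PiM {..<m} (\<lambda>_. P)) (subprob_algebra \<Theta>)"
    and ij: "i < m" "j < m"
  shows "(\<integral>\<omega>. measure (Mtr (map \<omega> [0..<m])) (low_rank_set \<Theta> s r (map \<omega> [0..<m]) (\<omega> i))
            \<partial>PiM {..<m} (\<lambda>_. P))
       = (\<integral>\<omega>. measure (Mtr (map \<omega> [0..<m])) (low_rank_set \<Theta> s r (map \<omega> [0..<m]) (\<omega> j))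
            \<partial>PiM {..<m} (\<lambda>_. P))"
proof -
  let ?g = "\<lambda>k \<omega>. measure (Mtr (map \<omega> [0..<m])) (low_rank_set \<Theta> s r (map \<omega> [0..<m]) (\<omega> k))"
  let ?\<pi> = "Transposition.transpose i j"
  have bij: "bij_betw ?\<pi> {..<m} {..<m}"
    using ij by (simp add: bij_betw_transpose_iff)
  have "?g i (\<lambda>k\<in>{..<m}. \<omega> (?\<pi> k)) = ?g j \<omega>" for \<omega>
  proof -
    have "map (\<lambda>k\<in>{..<m}. \<omega> (?\<pi> k)) [0..<m] = map (\<lambda>k. \<omega> (?\<pi> k)) [0..<m]"
      by (rule map_cong) auto
    then have "mset (map (\<lambda>k\<in>{..<m}. \<omega> (?\<pi> k)) [0..<m]) = mset (map \<omega> [0..<m])"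
      using mset_map_upt_reindex[OF bij, of \<omega>] by (simp only:)
    then have "Mtr (map (\<lambda>k\<in>{..<m}. \<omega> (?\<pi> k)) [0..<m]) = Mtr (map \<omega> [0..<m])"
      and "low_rank_set \<Theta> s r (map (\<lambda>k\<in>{..<m}. \<omega> (?\<pi> k)) [0..<m]) z
             = low_rank_set \<Theta> s r (map \<omega> [0..<m]) z" for z
      by (rule perm_inv, rule low_rank_set_mset_cong)
    moreover have "(\<lambda>k\<in>{..<m}. \<omega> (?\<pi> k)) i = \<omega> j"
      using ij by simp
    ultimately show ?thesis
      by (simp only:)
  qed
  moreover have "?g i \<in> borel_measurable (PiM {..<m} (\<lambda>_. P))"
    using ij by (intro measurable_measure_low_rank_set[OF sm ker]) auto
  ultimately show ?thesis
    using integral_PiM_reindex[OF P bij, of "?g i"] by simp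
qed

lemma integral_low_rank_ge:
  assumes P: "prob_space P" and perm_inv: "\<And>D D'. mset D = mset D' \<Longrightarrow> Mtr D = Mtr D'"
    and sm: "(\<lambda>(z, \<theta>). s z \<theta>) \<in> borel_measurable (P \<Otimes>\<^sub>M \<Theta>)"
    and prob: "\<And>D. prob_space (Mtr D)" and sets: "\<And>D. sets (Mtr D) = sets \<Theta>"
    and ker: "(\<lambda>\<omega>. Mtr (map \<omega> [0..<m])) \<in> measurable (PiM {..<m} (\<lambda>_. P)) (subprob_algebra \<Theta>)"
    and r: "r \<le> m" and i: "i < m"
  shows "real r \<le> real m * (\<integral>\<omega>. measure (Mtr (map \<omega> [0..<m]))
            (low_rank_set \<Theta> s r (map \<omega> [0..<m]) (\<omega> i)) \<partial>PiM {..<m} (\<lambda>_. P))"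
proof -
  let ?\<Omega> = "PiM {..<m} (\<lambda>_. P)"
  let ?g = "\<lambda>k \<omega>. measure (Mtr (map \<omega> [0..<m])) (low_rank_set \<Theta> s r (map \<omega> [0..<m]) (\<omega> k))"
  interpret \<Omega>: prob_space ?\<Omega>
    using P by (intro prob_space_PiM) auto
  have int: "integrable ?\<Omega> (?g k)" if "k < m" for k
  proof (rule integrable_measure_prob_kernel[OF \<Omega>.prob_space_axioms _ prob])
    show "?g k \<in> borel_measurable ?\<Omega>"
      by (rule measurable_measure_low_rank_set[OF sm ker]) (use that in \<open>simp_all add: atLeast0LessThan\<close>)
  qed
  have "real r \<le> (\<Sum>k<m. ?g k \<omega>)" if \<omega>: "\<omega> \<in> space ?\<Omega>" for \<omega>
  proof -
    let ?D = "map \<omega> [0..<m]"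
    have "\<forall>z\<in>set ?D. (\<lambda>\<theta>. s z \<theta>) \<in> borel_measurable \<Theta>"
      by (auto intro: borel_measurable_score_PiM[OF sm \<omega>])
    then have "real r \<le> (\<Sum>k<length ?D. measure (Mtr ?D) (low_rank_set \<Theta> s r ?D (?D ! k)))"
      using r sets_eq_imp_space_eq[OF sets]
      by (intro sum_measure_low_rank_set_ge prob) (auto simp: sets intro!: low_rank_set_sets)
    also have "\<dots> = (\<Sum>k<m. ?g k \<omega>)"
      by (intro sum.cong) auto
    finally show ?thesis .
  qed
  then have "real r \<le> (\<integral>\<omega>. (\<Sum>k<m. ?g k \<omega>) \<partial>?\<Omega>)"
    using int by (intro \<Omega>.integral_ge_const integrable_sum AE_I2) auto
  also have "\<dots> = (\<Sum>k<m. \<integral>\<omega>. ?g k \<omega> \<partial>?\<Omega>)"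
    using int by (intro Bochner_Integration.integral_sum) auto
  also have "\<dots> = (\<Sum>k<m. \<integral>\<omega>. ?g i \<omega> \<partial>?\<Omega>)"
    using i by (intro sum.cong refl integral_low_rank_exchangeable[OF P perm_inv sm ker]) auto
  finally show ?thesis
    by simp
qed

lemma dpscp_marginal_coverage:
  assumes \<sigma>: "0 < \<sigma>" and N: "N \<ge> 1" and \<beta>: "0 < \<beta>" "\<beta> < 1"
    and P: "prob_space P" and sm: "(\<lambda>(z, \<theta>). s z \<theta>) \<in> borel_measurable (P \<Otimes>\<^sub>M \<Theta>)"
    and prob: "\<And>D. prob_space (Mtr D)" and sets: "\<And>D. sets (Mtr D) = sets \<Theta>"
    and perm_inv: "\<And>D D'. mset D = mset D' \<Longrightarrow> Mtr D = Mtr D'"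
    and ker: "(\<lambda>\<omega>. Mtr (map \<omega> [0..<Suc n])) \<in> measurable (PiM {..<Suc n} (\<lambda>_. P)) (subprob_algebra \<Theta>)"
    and upper: "\<forall>z\<in>space P. \<forall>\<theta>\<in>space \<Theta>. s z \<theta> < b"
    and mn: "mn \<ge> 0" and buffer: "real r + mn \<le> real n + 1" and r: "(1 - \<alpha>) * (real n + 1) \<le> real r"
  shows "(1 - \<alpha>) * (1 - \<beta>) \<le> (\<integral>\<omega>. measure (dpscp Mtr \<Theta> s \<sigma> N \<beta> r mn a b (map \<omega> [0..<Suc n]))
            (cover_event \<Theta> s (\<omega> n)) \<partial>PiM {..<Suc n} (\<lambda>_. P))"
proof -
  let ?\<Omega> = "PiM {..<Suc n} (\<lambda>_. P)"
  let ?D = "\<lambda>\<omega>. map \<omega> [0..<Suc n]"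
  let ?g = "\<lambda>\<omega>. measure (Mtr (?D \<omega>)) (low_rank_set \<Theta> s r (?D \<omega>) (\<omega> n))"
  let ?cover = "\<lambda>\<omega>. measure (dpscp Mtr \<Theta> s \<sigma> N \<beta> r mn a b (?D \<omega>)) (cover_event \<Theta> s (\<omega> n))"
  interpret \<Omega>: prob_space ?\<Omega>
    using P by (intro prob_space_PiM) auto
  have r_le: "r \<le> Suc n"
    using buffer mn by linarith
  have scores: "\<forall>z\<in>set (\<omega> n # ?D \<omega>). (\<lambda>\<theta>. s z \<theta>) \<in> borel_measurable \<Theta>"
    if "\<omega> \<in> space ?\<Omega>" for \<omega>
    by (auto intro: borel_measurable_score_PiM[OF sm that])
  define G where "G = (\<integral>\<omega>. ?g \<omega> \<partial>?\<Omega>)"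
  have "real r \<le> real (Suc n) * G"
    unfolding G_def by (rule integral_low_rank_ge[OF P perm_inv sm prob sets ker r_le]) simp_all
  with r have "(1 - \<alpha>) * real (Suc n) \<le> G * real (Suc n)"
    by (simp add: algebra_simps)
  then have g: "1 - \<alpha> \<le> G"
    by (simp add: mult_le_cancel_right_pos)
  have "(\<integral>\<omega>. (1 - \<beta>) * ?g \<omega> \<partial>?\<Omega>) \<le> (\<integral>\<omega>. ?cover \<omega> \<partial>?\<Omega>)"
  proof (rule integral_mono)
    show "integrable ?\<Omega> (\<lambda>\<omega>. (1 - \<beta>) * ?g \<omega>)"
      by (intro integrable_mult_right integrable_measure_prob_kernel[OF \<Omega>.prob_space_axioms _ prob]
          measurable_measure_low_rank_set[OF sm ker]) (simp_all add: atLeast0LessThan)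
    show "integrable ?\<Omega> ?cover"
      by (rule integrable_measure_dpscp_cover_event[OF \<sigma> P sm prob sets ker]) (simp_all add: atLeast0LessThan)
    show "(1 - \<beta>) * ?g \<omega> \<le> ?cover \<omega>" if "\<omega> \<in> space ?\<Omega>" for \<omega>
      using that scores[OF that] upper r_le
      by (intro measure_dpscp_cover_event_ge[OF \<sigma> N \<beta> mn _ _ _ prob sets]) (auto simp: space_PiM PiE_iff)
  qed
  moreover have "(1 - \<alpha>) * (1 - \<beta>) \<le> (1 - \<beta>) * G"
    using g \<beta> by (simp add: mult.commute mult_left_mono)
  ultimately show ?thesis
    unfolding G_def by simp
qed

section \<open>Coverage under differential privacy\<close>

lemma tradeoff_le_measure:
  assumes "prob_space M" and "prob_space M'" and "sets M = sets M'" and "A \<in> sets M"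
  shows "tradeoff M M' (measure M A) \<le> 1 - measure M' A"
proof -
  interpret M: prob_space M by fact
  interpret M': prob_space M' by fact
  have space: "space M' = space M"
    using sets_eq_imp_space_eq[OF assms(3)] by simp
  have A: "A \<subseteq> space M"
    using assms(4) by (rule sets.sets_into_space)
  have "(\<integral>x. indicator A x \<partial>M) = measure M A" "(\<integral>x. indicator A x \<partial>M') = measure M' A"
    using A space by (simp_all add: Int_absorb2)
  then have "1 - measure M' A \<in> {1 - (\<integral>x. \<phi> x \<partial>M') | \<phi>. \<phi> \<in> borel_measurable M
      \<and> (\<forall>x\<in>space M. 0 \<le> \<phi> x \<and> \<phi> x \<le> 1) \<and> (\<integral>x. \<phi> x \<partial>M) \<le> measure M A}"
    using assms(4) by (intro CollectI exI[where x="indicator A"]) (auto split: split_indicator)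
  moreover have "bdd_below {1 - (\<integral>x. \<phi> x \<partial>M') | \<phi>. \<phi> \<in> borel_measurable M
      \<and> (\<forall>x\<in>space M. 0 \<le> \<phi> x \<and> \<phi> x \<le> 1) \<and> (\<integral>x. \<phi> x \<partial>M) \<le> measure M A}"
  proof (rule bdd_belowI[where m=0], clarify)
    fix \<phi> :: "_ \<Rightarrow> real" assume "\<forall>x\<in>space M. 0 \<le> \<phi> x \<and> \<phi> x \<le> 1"
    then have "(\<integral>x. \<phi> x \<partial>M') \<le> 1"
      using space by (cases "integrable M' \<phi>")
        (auto intro!: M'.integral_le_const AE_I2 simp: not_integrable_integral_eq)
    then show "0 \<le> 1 - (\<integral>x. \<phi> x \<partial>M')"
      by simp
  qed
  ultimately show ?thesis
    unfolding tradeoff_def by (rule cInf_lower)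
qed

lemma f_DP_measure_ge:
  assumes "f_DP M f" and "adjacent D D'"
    and "prob_space (M D)" and "prob_space (M D')" and "sets (M D) = sets (M D')" and "A \<in> sets (M D)"
  shows "f (1 - measure (M D) A) \<le> measure (M D') A"
proof -
  interpret MD: prob_space "M D" by fact
  interpret MD': prob_space "M D'" by fact
  let ?C = "space (M D) - A"
  have space: "space (M D') = space (M D)"
    using sets_eq_imp_space_eq[OF assms(5)] by simp
  have C: "measure (M D) ?C = 1 - measure (M D) A" "measure (M D') ?C = 1 - measure (M D') A"
    using assms(5,6) space by (auto intro: MD.prob_compl MD'.prob_compl[unfolded space])
  have "f (1 - measure (M D) A) \<le> tradeoff (M D) (M D') (measure (M D) ?C)"
    using assms(1,2) C(1) MD.prob_le_1[of A] unfolding f_DP_def by auto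
  also have "\<dots> \<le> 1 - measure (M D') ?C"
    using assms(6) by (intro tradeoff_le_measure assms(3-5)) auto
  finally show ?thesis
    using C(2) by simp
qed

lemma convex_antimono_support_line:
  fixes f :: "real \<Rightarrow> real"
  assumes cv: "convex_on {0..1} f" and mono: "\<forall>x\<in>{0..1}. \<forall>y\<in>{0..1}. x \<le> y \<longrightarrow> f y \<le> f x"
    and t: "0 < t" "t < 1"
  obtains c where "c \<le> 0" and "\<And>x. x \<in> {0..1} \<Longrightarrow> f t + c * (x - t) \<le> f x"
proof -
  define slope where "slope y = (f y - f t) / (y - t)" for y
  define c where "c = Inf (slope ` {t<..1})"
  have slope_mono: "slope x \<le> slope y" if "0 \<le> x" "x < t" "t < y" "y \<le> 1" for x y
  proof -
    have "slope x \<le> (f x - f y) / (x - y)"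
      using convex_on_slope_le(1)[OF cv, of x y t] that by (auto simp: slope_def)
    also have "\<dots> \<le> (f t - f y) / (t - y)"
      using convex_on_slope_le(2)[OF cv, of x y t] that by auto
    also have "\<dots> = slope y"
      unfolding slope_def by (metis minus_diff_eq minus_divide_divide)
    finally show ?thesis .
  qed
  have bdd: "bdd_below (slope ` {t<..1})"
    using slope_mono[of 0] t by (intro bdd_belowI2[where m="slope 0"]) auto
  have below: "c \<le> slope y" if "t < y" "y \<le> 1" for y
    unfolding c_def using that by (intro cInf_lower bdd) auto
  have above: "slope x \<le> c" if "0 \<le> x" "x < t" for x
    unfolding c_def using that t by (intro cINF_greatest slope_mono) auto
  show ?thesis
  proof
    have "slope 1 \<le> 0"
      using mono t unfolding slope_def by (intro divide_nonpos_pos) auto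
    then show "c \<le> 0"
      using below[of 1] t by simp
    show "f t + c * (x - t) \<le> f x" if "x \<in> {0..1}" for x
    proof (cases x t rule: linorder_cases)
      case less
      then show ?thesis
        using above[of x] that by (auto simp: slope_def divide_le_eq mult.commute)
    next
      case greater
      then show ?thesis
        using below[of x] that by (auto simp: slope_def le_divide_eq mult.commute)
    qed simp
  qed
qed

lemma (in prob_space) convex_antimono_integral_ge:
  fixes f :: "real \<Rightarrow> real"
  assumes cv: "convex_on {0..1} f" and mono: "\<forall>x\<in>{0..1}. \<forall>y\<in>{0..1}. x \<le> y \<longrightarrow> f y \<le> f x"
    and t: "0 < t" "t < 1"
    and X: "integrable M X" and Y: "integrable M Y"
    and XY: "\<And>\<omega>. \<omega> \<in> space M \<Longrightarrow> X \<omega> \<in> {0..1} \<and> f (X \<omega>) \<le> Y \<omega>"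
    and EX: "expectation X \<le> t"
  shows "f t \<le> expectation Y"
proof -
  obtain c where c: "c \<le> 0" and line: "\<And>x. x \<in> {0..1} \<Longrightarrow> f t + c * (x - t) \<le> f x"
    using convex_antimono_support_line[OF cv mono t] by blast
  have "f t \<le> f t + c * (expectation X - t)"
    using c EX by (simp add: mult_nonpos_nonpos)
  also have "\<dots> = expectation (\<lambda>\<omega>. f t + c * (X \<omega> - t))"
    using X by (simp add: prob_space algebra_simps)
  also have "\<dots> \<le> expectation Y"
    using X Y XY line by (intro integral_mono) (auto intro: order.trans)
  finally show ?thesis .
qed

lemma dpscp_DP_coverage:
  assumes \<sigma>: "0 < \<sigma>" and P: "prob_space P" and sm: "(\<lambda>(z, \<theta>). s z \<theta>) \<in> borel_measurable (P \<Otimes>\<^sub>M \<Theta>)"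
    and prob: "\<And>D. prob_space (Mtr D)" and sets: "\<And>D. sets (Mtr D) = sets \<Theta>"
    and ker_n: "(\<lambda>\<omega>. Mtr (map \<omega> [0..<n])) \<in> measurable (PiM {..<Suc n} (\<lambda>_. P)) (subprob_algebra \<Theta>)"
    and ker_Sn: "(\<lambda>\<omega>. Mtr (map \<omega> [0..<Suc n])) \<in> measurable (PiM {..<Suc n} (\<lambda>_. P)) (subprob_algebra \<Theta>)"
    and f: "tradeoff_fun f" and DP: "f_DP (dpscp Mtr \<Theta> s \<sigma> N \<beta> r mn a b) f"
    and t: "0 < t" "t < 1"
    and coverage: "1 - t \<le> (\<integral>\<omega>. measure (dpscp Mtr \<Theta> s \<sigma> N \<beta> r mn a b (map \<omega> [0..<Suc n]))
                      (cover_event \<Theta> s (\<omega> n)) \<partial>PiM {..<Suc n} (\<lambda>_. P))"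
  shows "f t \<le> (\<integral>\<omega>. measure (dpscp Mtr \<Theta> s \<sigma> N \<beta> r mn a b (map \<omega> [0..<n]))
                      (cover_event \<Theta> s (\<omega> n)) \<partial>PiM {..<Suc n} (\<lambda>_. P))"
proof -
  let ?\<Omega> = "PiM {..<Suc n} (\<lambda>_. P)"
  let ?M = "dpscp Mtr \<Theta> s \<sigma> N \<beta> r mn a b"
  let ?cover = "\<lambda>L \<omega>. measure (?M (map \<omega> L)) (cover_event \<Theta> s (\<omega> n))"
  interpret \<Omega>: prob_space ?\<Omega>
    using P by (intro prob_space_PiM) auto
  note dpscp = prob_space_dpscp_sample[OF \<sigma> sm prob sets] sets_dpscp_sample[OF \<sigma> sm prob sets]
  have "f (1 - ?cover [0..<Suc n] \<omega>) \<le> ?cover [0..<n] \<omega>" if \<omega>: "\<omega> \<in> space ?\<Omega>" for \<omega>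
  proof (rule f_DP_measure_ge[OF DP])
    show "adjacent (map \<omega> [0..<Suc n]) (map \<omega> [0..<n])"
      unfolding adjacent_def by (intro exI[of _ "map \<omega> [0..<n]"] exI[of _ "[]"] exI[of _ "\<omega> n"]) simp
    have "cover_event \<Theta> s (\<omega> n) \<in> sets (\<Theta> \<Otimes>\<^sub>M borel)"
      by (intro cover_event_sets borel_measurable_score_PiM[OF sm \<omega>]) simp
    then show "cover_event \<Theta> s (\<omega> n) \<in> sets (?M (map \<omega> [0..<Suc n]))"
      using dpscp(2)[OF \<omega>, of "[0..<Suc n]"] by (simp del: upt_Suc add: atLeast0LessThan)
  qed (use dpscp[OF \<omega>] in \<open>simp_all del: upt_Suc add: atLeast0LessThan\<close>)
  moreover have "?cover [0..<Suc n] \<omega> \<le> 1" if "\<omega> \<in> space ?\<Omega>" for \<omega>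
    using dpscp(1)[OF that, of "[0..<Suc n]"] by (simp del: upt_Suc add: atLeast0LessThan prob_space.prob_le_1)
  moreover have int1: "integrable ?\<Omega> (?cover [0..<Suc n])"
    by (rule integrable_measure_dpscp_cover_event[OF \<sigma> P sm prob sets ker_Sn]) (simp_all add: atLeast0LessThan)
  moreover have "integrable ?\<Omega> (?cover [0..<n])"
    by (rule integrable_measure_dpscp_cover_event[OF \<sigma> P sm prob sets ker_n]) (auto simp: atLeast0LessThan)
  moreover have "(\<integral>\<omega>. 1 - ?cover [0..<Suc n] \<omega> \<partial>?\<Omega>) \<le> t"
    using coverage int1 by (simp del: upt_Suc add: \<Omega>.prob_space)
  moreover have "convex_on {0..1} f" "\<forall>x\<in>{0..1}. \<forall>y\<in>{0..1}. x \<le> y \<longrightarrow> f y \<le> f x"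
    using f by (simp_all add: tradeoff_fun_def)
  ultimately show ?thesis
    by (intro \<Omega>.convex_antimono_integral_ge[OF _ _ t, where X="\<lambda>\<omega>. 1 - ?cover [0..<Suc n] \<omega>"])
      (simp_all del: upt_Suc)
qed

theorem corollary1:
  fixes P :: "'z measure" and \<Theta> :: "'th measure"
    and Mtr :: "'z list \<Rightarrow> 'th measure" and s :: "'z \<Rightarrow> 'th \<Rightarrow> real"
    and \<alpha> \<beta> \<sigma> mn a b :: real and n N :: nat and f :: "real \<Rightarrow> real"
  assumes alpha: "0 < \<alpha>" "\<alpha> < 1"
    and beta: "0 < \<beta>" "\<beta> < 1"
    and sigma: "\<sigma> > 0" and N: "N \<ge> 1"
    and data: "prob_space P"
    and mn: "mn \<ge> 0"
    and buffer: "real (nat \<lceil>(1 - \<alpha>) * (real n + 1)\<rceil>) + mn \<le> real n + 1"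
    and train_prob: "\<And>D. prob_space (Mtr D)"
    and train_sets: "\<And>D. sets (Mtr D) = sets \<Theta>"
    and perm_inv: "\<And>D D'. mset D = mset D' \<Longrightarrow> Mtr D = Mtr D'"
    and score_meas: "(\<lambda>(z, \<theta>). s z \<theta>) \<in> borel_measurable (P \<Otimes>\<^sub>M \<Theta>)"
    and kernel_n: "(\<lambda>zs. Mtr (map zs [0..<n])) \<in> measurable (PiM {..<Suc n} (\<lambda>_. P)) (subprob_algebra \<Theta>)"
    and kernel_Sn: "(\<lambda>zs. Mtr (map zs [0..<Suc n])) \<in> measurable (PiM {..<Suc n} (\<lambda>_. P)) (subprob_algebra \<Theta>)"
    and upper: "\<forall>z\<in>space P. \<forall>\<theta>\<in>space \<Theta>. s z \<theta> < b"
  shows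
    "(\<integral>zs. measure (dpscp Mtr \<Theta> s \<sigma> N \<beta> (nat \<lceil>(1 - \<alpha>) * (real n + 1)\<rceil>) mn a b (map zs [0..<Suc n]))
                {x \<in> space (\<Theta> \<Otimes>\<^sub>M borel). s (zs n) (fst x) \<le> snd x}
        \<partial>PiM {..<Suc n} (\<lambda>_. P)) \<ge> 1 - (\<alpha> + \<beta> - \<alpha> * \<beta>)
     \<and> ((tradeoff_fun f \<and> f_DP (dpscp Mtr \<Theta> s \<sigma> N \<beta> (nat \<lceil>(1 - \<alpha>) * (real n + 1)\<rceil>) mn a b) f
          \<and> real (nat \<lceil>(1 - \<alpha>) * (real n + 1)\<rceil>) + mn \<le> real n) \<longrightarrow>
        (\<integral>zs. measure (dpscp Mtr \<Theta> s \<sigma> N \<beta> (nat \<lceil>(1 - \<alpha>) * (real n + 1)\<rceil>) mn a b (map zs [0..<n]))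
                {x \<in> space (\<Theta> \<Otimes>\<^sub>M borel). s (zs n) (fst x) \<le> snd x}
        \<partial>PiM {..<Suc n} (\<lambda>_. P)) \<ge> f (\<alpha> + \<beta> - \<alpha> * \<beta>))"
proof -
  define r where "r = nat \<lceil>(1 - \<alpha>) * (real n + 1)\<rceil>"
  define \<alpha>\<^sub>0 where "\<alpha>\<^sub>0 = \<alpha> + \<beta> - \<alpha> * \<beta>"
  have "(1 - \<alpha>) * (real n + 1) \<le> real r"
    unfolding r_def by (rule real_nat_ceiling_ge)
  from dpscp_marginal_coverage[OF sigma N beta data score_meas train_prob train_sets perm_inv kernel_Sn
      upper mn buffer[folded r_def] this]
  have coverage: "1 - \<alpha>\<^sub>0 \<le> (\<integral>\<omega>. measure (dpscp Mtr \<Theta> s \<sigma> N \<beta> r mn a b (map \<omega> [0..<Suc n]))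
      (cover_event \<Theta> s (\<omega> n)) \<partial>PiM {..<Suc n} (\<lambda>_. P))"
    by (simp add: \<alpha>\<^sub>0_def algebra_simps)
  have "0 < \<alpha> + \<beta> * (1 - \<alpha>)" "0 < (1 - \<alpha>) * (1 - \<beta>)"
    using alpha beta by (simp_all add: add_pos_nonneg)
  then have "0 < \<alpha>\<^sub>0" "\<alpha>\<^sub>0 < 1"
    unfolding \<alpha>\<^sub>0_def by (simp_all add: algebra_simps)
  with coverage dpscp_DP_coverage[OF sigma data score_meas train_prob train_sets kernel_n kernel_Sn]
  show ?thesis
    unfolding cover_event_def r_def \<alpha>\<^sub>0_def by blast
qed

end
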